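(* The only normal subgroups of $G=S(2^\infty)\ltimes \widetilde C(X;\mathbb{Z}_2)$ are $\{e\}$, $\widetilde C(X;\mathbb{Z}_2)$ and $G$.
   Context: For $n\ge1$ let $S(2^n)$ be the symmetric group of the finite set $\{0,1\}^n$, embedded in $S(2^{n+1})$ via $s\mapsto\tilde s$, $\tilde s(x,y)=(s(x),y)$ ($x\in\{0,1\}^n$, $y\in\{0,1\}$); $S(2^\infty)=\bigcup_n S(2^n)$. Let $X=\{0,1\}^{\mathbb N}$; $S(2^\infty)$ acts on $X$ by homeomorphisms via $s(x,y)=(s(x),y)$ for $s\in S(2^n)$, $x\in\{0,1\}^n$, $y\in\{0,1\}^{\mathbb N}$. $C(X;\mathbb Z_2)$ is the abelian group of continuous maps $X\to\mathbb Z_2$ under pointwise addition; its elements are $f_A=\mathbf 1_A$ for clopen $A\subseteq X$, with $f_Af_B=f_{A\triangle B}$. $S(2^\infty)$ acts by $g\cdot f_A=f_{g(A)}$. The constant functions $\{f_\emptyset,f_X\}$ form an invariant subgroup and $\widetilde C(X;\mathbb Z_2)$ is the quotient group; $\widetilde f_A$ denotes the class of $f_A$ (so $\widetilde f_A=\widetilde f_{X\setminus A}$). $G=S(2^\infty)\ltimes\widetilde C(X;\mathbb Z_2)$, with $g\widetilde f_Ag^{-1}=\widetilde f_{g(A)}$. *)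

theory Defs
  imports "HOL-Analysis.Analysis" "HOL-Algebra.Coset"
begin

text \<open>The Cantor space X = {0,1}^N, modelled as nat => bool with the product topology
  (bool carries its order topology, which is discrete).\<close>
type_synonym cantor = "nat \<Rightarrow> bool"

definition clopen_set :: "cantor set \<Rightarrow> bool" where
  "clopen_set A \<longleftrightarrow> open A \<and> closed A"

text \<open>S(2^infinity): the bijections of X induced by a permutation s of {0,1}^n for some n,
  i.e. g(x,y) = (s(x), y) with x the length-n prefix and y the tail.\<close>
definition Sinf :: "(cantor \<Rightarrow> cantor) set" where
  "Sinf = {g. \<exists>n. bij g
              \<and> (\<forall>x i. n \<le> i \<longrightarrow> g x i = x i)
              \<and> (\<forall>x y. (\<forall>i<n. x i = y i) \<longrightarrow> (\<forall>i<n. g x i = g y i))}"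

text \<open>The class of f_A in C(X;Z_2)/{constants}: identified with the set {A, X - A}.\<close>
definition cls :: "cantor set \<Rightarrow> cantor set set" where
  "cls A = {A, - A}"

definition Ctilde :: "cantor set set set" where
  "Ctilde = {cls A | A. clopen_set A}"

text \<open>Group operation on Ctilde: f_A f_B = f_{A symmetric difference B}.\<close>
definition csum :: "cantor set set \<Rightarrow> cantor set set \<Rightarrow> cantor set set" where
  "csum c d = {(A - B) \<union> (B - A) | A B. A \<in> c \<and> B \<in> d}"

text \<open>Action of S(2^infinity): g . f_A = f_{g(A)}.\<close>
definition cact :: "(cantor \<Rightarrow> cantor) \<Rightarrow> cantor set set \<Rightarrow> cantor set set" where
  "cact g c = (\<lambda>A. g ` A) ` c"

text \<open>G = S(2^infinity) semidirect Ctilde; a pair (c, g) stands for the product f g, so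
  (f g)(f' g') = (f (g f' g^-1)) (g g').\<close>
definition Ggrp :: "(cantor set set \<times> (cantor \<Rightarrow> cantor)) monoid" where
  "Ggrp = \<lparr> carrier = Ctilde \<times> Sinf,
            mult = (\<lambda>(c, g) (d, h). (csum c (cact g d), g \<circ> h)),
            one = (cls {}, id) \<rparr>"

definition Cpart :: "(cantor set set \<times> (cantor \<Rightarrow> cantor)) set" where
  "Cpart = Ctilde \<times> {id}"

end

(*
  Let N be a normal subgroup of G. If N contains some (f, g) with g ~= id, its commutator with
  f_B, for B a small cylinder around a point moved by g, is f_D for a proper nonempty clopen set D.
  Conjugating f_D by transpositions of cylinders yields f_{U + V} for any two distinct cylinders
  U, V of a fine enough level, hence every single cylinder; as clopen sets are finite disjoint
  unions of cylinders, N contains all of Ctilde, and with it the permutation g itself. The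
  commutator of g with a transposition of cylinders is a product of two disjoint transpositions;
  these are all conjugate, every transposition of level n is such a product at level n + 1, and
  transpositions generate the permutations of each level. So N = G. If instead N lies in Ctilde,
  the same argument shows that N is trivial or all of Ctilde.
*)
theory Submission
  imports Defs "HOL-Algebra.Generated_Groups"
begin

section \<open>Cylinders and clopen subsets of the Cantor space\<close>

definition prefix_bits :: "nat \<Rightarrow> cantor \<Rightarrow> bool list" where
  "prefix_bits n x = map x [0..<n]"

lemma length_prefix_bits [simp]: "length (prefix_bits n x) = n"
  by (simp add: prefix_bits_def)

lemma prefix_bits_eq_iff: "prefix_bits n x = prefix_bits n y \<longleftrightarrow> (\<forall>i<n. x i = y i)"
  by (auto simp: prefix_bits_def map_eq_conv)

lemma prefix_bits_Suc: "prefix_bits (Suc n) x = prefix_bits n x @ [x n]"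
  by (simp add: prefix_bits_def)

lemma prefix_bits_fun_upd [simp]: "n \<le> m \<Longrightarrow> prefix_bits n (x(m := b)) = prefix_bits n x"
  by (simp add: prefix_bits_eq_iff)

lemma prefix_bits_eq_mono:
  "prefix_bits m x = prefix_bits m y \<Longrightarrow> n \<le> m \<Longrightarrow> prefix_bits n x = prefix_bits n y"
  by (simp add: prefix_bits_eq_iff)

lemma cantor_eqI: "prefix_bits n x = prefix_bits n y \<Longrightarrow> (\<And>i. n \<le> i \<Longrightarrow> x i = y i) \<Longrightarrow> x = y"
  by (rule ext) (metis not_le prefix_bits_eq_iff)

lemma finite_range_prefix_bits: "finite (range (prefix_bits n))"
  by (rule finite_subset[OF _ finite_lists_length_eq[of "UNIV :: bool set" n]]) auto

definition cyl :: "nat \<Rightarrow> cantor \<Rightarrow> cantor set" where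
  "cyl n u = {x. prefix_bits n x = prefix_bits n u}"

lemma mem_cyl [simp]: "x \<in> cyl n u \<longleftrightarrow> prefix_bits n x = prefix_bits n u"
  by (simp add: cyl_def)

lemma cyl_eq_iff: "cyl n u = cyl n v \<longleftrightarrow> prefix_bits n u = prefix_bits n v"
  by (auto simp: cyl_def)

lemma cyl_disjoint: "prefix_bits n u \<noteq> prefix_bits n v \<Longrightarrow> cyl n u \<inter> cyl n v = {}"
  by auto

lemma cyl_Suc_split: "cyl n u = cyl (Suc n) (u(n := False)) \<union> cyl (Suc n) (u(n := True))"
  by (auto simp: prefix_bits_Suc)

lemma finite_range_cyl: "finite (range (cyl n))"
proof -
  have "range (cyl n) = (\<lambda>l. prefix_bits n -` {l}) ` range (prefix_bits n)"
    by (auto simp: cyl_def)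
  then show ?thesis
    using finite_range_prefix_bits by simp
qed

definition prefix_determined :: "nat \<Rightarrow> cantor set \<Rightarrow> bool" where
  "prefix_determined n A \<longleftrightarrow>
     (\<forall>x y. prefix_bits n x = prefix_bits n y \<longrightarrow> (x \<in> A \<longleftrightarrow> y \<in> A))"

lemma prefix_determinedD:
  "prefix_determined n A \<Longrightarrow> prefix_bits n x = prefix_bits n y \<Longrightarrow> x \<in> A \<longleftrightarrow> y \<in> A"
  unfolding prefix_determined_def by (erule allE)+ (erule mp)

lemma prefix_determined_mono:
  assumes "prefix_determined n A" "n \<le> m"
  shows "prefix_determined m A"
  unfolding prefix_determined_def
proof (intro allI impI)
  fix x y
  assume "prefix_bits m x = prefix_bits m y"
  then have "prefix_bits n x = prefix_bits n y"
    using assms(2) by (rule prefix_bits_eq_mono)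
  then show "x \<in> A \<longleftrightarrow> y \<in> A"
    by (rule prefix_determinedD[OF assms(1)])
qed

lemma prefix_determined_Union_cyl:
  assumes "prefix_determined n A"
  shows "A = \<Union> (cyl n ` A)"
proof (intro equalityI subsetI)
  fix x
  assume "x \<in> A"
  then show "x \<in> \<Union> (cyl n ` A)"
    by (rule UN_I) simp
next
  fix x
  assume "x \<in> \<Union> (cyl n ` A)"
  then obtain a where "a \<in> A" "prefix_bits n x = prefix_bits n a"
    by auto
  then show "x \<in> A"
    using prefix_determinedD[OF assms] by blast
qed

lemma open_cyl: "open (cyl n u)"
proof -
  have "cyl n u = {x. \<forall>i\<in>{..<n}. x (id i) \<in> {u i}}"
    by (auto simp: prefix_bits_eq_iff)
  also have "open \<dots>"
    by (rule product_topology_basis') (simp_all add: open_discrete)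
  finally show ?thesis .
qed

lemma open_prefix_determined: "prefix_determined n A \<Longrightarrow> open A"
proof -
  assume "prefix_determined n A"
  then have "A = \<Union> (cyl n ` A)"
    by (rule prefix_determined_Union_cyl)
  also have "open \<dots>"
    by (simp add: open_UN open_cyl)
  finally show ?thesis .
qed

lemma prefix_determined_Compl: "prefix_determined n (- A) \<longleftrightarrow> prefix_determined n A"
  unfolding prefix_determined_def by simp

lemma clopen_set_prefix_determined: "prefix_determined n A \<Longrightarrow> clopen_set A"
  unfolding clopen_set_def closed_def
  by (metis open_prefix_determined prefix_determined_Compl)

lemma compact_cantor: "compact (UNIV :: cantor set)"
proof -
  have "compact_space (euclidean :: bool topology)"
    unfolding compact_space_def compactin_euclidean_iff topspace_euclidean
    by (rule finite_imp_compact) simp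
  then have "compact_space (product_topology (\<lambda>i::nat. (euclidean :: bool topology)) UNIV)"
    by (simp add: compact_space_product_topology)
  then show ?thesis
    by (simp add: euclidean_product_topology compact_space_def)
qed

lemma open_contains_cyl:
  assumes "open (U :: cantor set)" "x \<in> U"
  shows "\<exists>n. cyl n x \<subseteq> U"
proof -
  have "openin (product_topology (\<lambda>i. euclidean) UNIV) U"
    using assms(1) by (simp add: open_fun_def)
  from product_topology_open_contains_basis[OF this assms(2)]
  obtain X where X: "x \<in> (\<Pi>\<^sub>E i\<in>UNIV. X i)" "finite {i. X i \<noteq> UNIV}" "(\<Pi>\<^sub>E i\<in>UNIV. X i) \<subseteq> U"
    by auto
  obtain n where n: "\<And>i. X i \<noteq> UNIV \<Longrightarrow> i < n"
    using finite_nat_bounded[OF X(2)] by blast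
  have "cyl n x \<subseteq> (\<Pi>\<^sub>E i\<in>UNIV. X i)"
  proof
    fix y
    assume "y \<in> cyl n x"
    then have "y i \<in> X i" for i
      using n[of i] X(1) by (cases "X i = UNIV") (auto simp: prefix_bits_eq_iff PiE_iff)
    then show "y \<in> (\<Pi>\<^sub>E i\<in>UNIV. X i)"
      by (simp add: PiE_iff)
  qed
  with X(3) show ?thesis by blast
qed

text \<open>By compactness, finitely many cylinders, each inside A or inside its complement, cover
  the Cantor space; A is then determined by the longest of their prefixes.\<close>
lemma clopen_set_imp_prefix_determined:
  assumes "clopen_set A"
  shows "\<exists>n. prefix_determined n A"
proof -
  have "open A" "open (- A)"
    using assms by (auto simp: clopen_set_def)
  then have "\<exists>n. cyl n x \<subseteq> A \<or> cyl n x \<subseteq> - A" for x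
    using open_contains_cyl[of A x] open_contains_cyl[of "- A" x] by (cases "x \<in> A") auto
  then obtain N where N: "\<And>x. cyl (N x) x \<subseteq> A \<or> cyl (N x) x \<subseteq> - A"
    by metis
  have "UNIV \<subseteq> (\<Union>x. cyl (N x) x)"
    by auto
  from compactE_image[OF compact_cantor _ this] open_cyl
  obtain C where C: "finite C" "UNIV \<subseteq> (\<Union>x\<in>C. cyl (N x) x)"
    by metis
  obtain n where n: "\<And>x. x \<in> C \<Longrightarrow> N x \<le> n"
    using finite_nat_bounded[OF finite_imageI[OF C(1), of N]] by (auto intro: less_imp_le)
  have "prefix_determined n A"
    unfolding prefix_determined_def
  proof (intro allI impI)
    fix y z
    assume yz: "prefix_bits n y = prefix_bits n z"
    obtain x where x: "x \<in> C" "y \<in> cyl (N x) x"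
      using C(2) by blast
    moreover have "z \<in> cyl (N x) x"
      using x(2) prefix_bits_eq_mono[OF yz n[OF x(1)]] by simp
    ultimately show "y \<in> A \<longleftrightarrow> z \<in> A"
      using N[of x] by blast
  qed
  then show ?thesis ..
qed

lemma clopen_set_iff_prefix_determined: "clopen_set A \<longleftrightarrow> (\<exists>n. prefix_determined n A)"
  using clopen_set_imp_prefix_determined clopen_set_prefix_determined by blast

lemma clopen_set_cyl: "clopen_set (cyl n u)"
  by (rule clopen_set_prefix_determined[of n]) (simp add: prefix_determined_def)

section \<open>The permutations of level n\<close>

definition level_perm :: "nat \<Rightarrow> (cantor \<Rightarrow> cantor) \<Rightarrow> bool" where
  "level_perm n g \<longleftrightarrow> bij g \<and> (\<forall>x i. n \<le> i \<longrightarrow> g x i = x i) \<and>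
     (\<forall>x y. prefix_bits n x = prefix_bits n y \<longrightarrow> prefix_bits n (g x) = prefix_bits n (g y))"

lemma Sinf_iff_level_perm: "g \<in> Sinf \<longleftrightarrow> (\<exists>n. level_perm n g)"
  unfolding Sinf_def level_perm_def prefix_bits_eq_iff by blast

lemma level_perm_bij: "level_perm n g \<Longrightarrow> bij g"
  unfolding level_perm_def by blast

lemma level_perm_tail: "level_perm n g \<Longrightarrow> n \<le> i \<Longrightarrow> g x i = x i"
  unfolding level_perm_def by blast

lemma level_perm_prefix_bits:
  "level_perm n g \<Longrightarrow> prefix_bits n x = prefix_bits n y \<Longrightarrow> prefix_bits n (g x) = prefix_bits n (g y)"
  unfolding level_perm_def by blast

lemma level_perm_fixed:
  assumes "level_perm n g" "prefix_bits n (g x) = prefix_bits n x"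
  shows "g x = x"
proof
  fix i
  show "g x i = x i"
    using assms level_perm_tail[OF assms(1), of i x] by (cases "i < n") (simp_all add: prefix_bits_eq_iff)
qed

lemma level_perm_id: "level_perm n id"
  by (simp add: level_perm_def)

lemma level_perm_comp:
  assumes "level_perm n g" "level_perm n h"
  shows "level_perm n (g \<circ> h)"
  unfolding level_perm_def
proof (intro conjI allI impI)
  show "bij (g \<circ> h)"
    using assms by (intro bij_comp level_perm_bij)
  show "(g \<circ> h) x i = x i" if "n \<le> i" for x i
    using level_perm_tail[OF assms(1) that] level_perm_tail[OF assms(2) that] by simp
  show "prefix_bits n ((g \<circ> h) x) = prefix_bits n ((g \<circ> h) y)"
    if "prefix_bits n x = prefix_bits n y" for x y
    using level_perm_prefix_bits[OF assms(1) level_perm_prefix_bits[OF assms(2) that]] by simp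
qed

lemma level_perm_mono:
  assumes "level_perm n g" "n \<le> m"
  shows "level_perm m g"
  unfolding level_perm_def
proof (intro conjI allI impI)
  show "bij g"
    using assms(1) by (rule level_perm_bij)
  show "g x i = x i" if "m \<le> i" for x i
    using level_perm_tail[OF assms(1)] that assms(2) by simp
  fix x y
  assume xy: "prefix_bits m x = prefix_bits m y"
  have "g x i = g y i" if "i < m" for i
  proof (cases "i < n")
    case True
    with level_perm_prefix_bits[OF assms(1) prefix_bits_eq_mono[OF xy assms(2)]] show ?thesis
      by (simp add: prefix_bits_eq_iff)
  next
    case False
    with xy that show ?thesis
      by (simp add: level_perm_tail[OF assms(1)] prefix_bits_eq_iff)
  qed
  then show "prefix_bits m (g x) = prefix_bits m (g y)"
    by (simp add: prefix_bits_eq_iff)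
qed

definition graft :: "nat \<Rightarrow> cantor \<Rightarrow> cantor \<Rightarrow> cantor" where
  "graft n a z = (\<lambda>i. if i < n then a i else z i)"

lemma prefix_bits_graft [simp]: "prefix_bits n (graft n a z) = prefix_bits n a"
  by (simp add: prefix_bits_eq_iff graft_def)

lemma level_perm_graft:
  assumes "level_perm n g"
  shows "g (graft n a z) = graft n (g a) z"
proof
  fix i
  show "g (graft n a z) i = graft n (g a) z i"
  proof (cases "i < n")
    case True
    have "prefix_bits n (g (graft n a z)) = prefix_bits n (g a)"
      by (rule level_perm_prefix_bits[OF assms]) simp
    with True show ?thesis
      by (simp add: prefix_bits_eq_iff graft_def)
  next
    case False
    then show ?thesis
      by (simp add: level_perm_tail[OF assms] graft_def)
  qed
qed

lemma graft_level_perm: "level_perm n g \<Longrightarrow> graft n a (g z) = graft n a z"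
  by (simp add: graft_def level_perm_tail)

lemma level_perm_inv_into:
  assumes "level_perm n g"
  shows "level_perm n (inv_into UNIV g)"
  unfolding level_perm_def
proof (intro conjI allI impI)
  have g: "bij g"
    using assms by (rule level_perm_bij)
  then show "bij (inv_into UNIV g)"
    by (rule bij_imp_bij_inv)
  have g_inv: "g (inv_into UNIV g w) = w" for w
    using g by (simp add: bij_is_surj surj_f_inv_f)
  show tail: "inv_into UNIV g x i = x i" if "n \<le> i" for x i
    using level_perm_tail[OF assms that, of "inv_into UNIV g x"] by (simp add: g_inv)
  fix x y
  assume xy: "prefix_bits n x = prefix_bits n y"
  define x' y' where "x' = inv_into UNIV g x" and "y' = inv_into UNIV g y"
  have "graft n x y' = y"
    using xy tail by (auto simp: graft_def prefix_bits_eq_iff y'_def)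
  then have "g (graft n x' y') = g y'"
    by (simp add: level_perm_graft[OF assms] x'_def y'_def g_inv)
  then have "graft n x' y' = y'"
    using g by (simp add: bij_is_inj inj_eq)
  then show "prefix_bits n (inv_into UNIV g x) = prefix_bits n (inv_into UNIV g y)"
    by (metis prefix_bits_graft x'_def y'_def)
qed

lemma level_perm_inv_into_apply [simp]: "level_perm n g \<Longrightarrow> g (inv_into UNIV g x) = x"
  by (simp add: level_perm_bij bij_is_surj surj_f_inv_f)

lemma level_perm_prefix_bits_eq_iff:
  assumes "level_perm n g"
  shows "prefix_bits n (g x) = prefix_bits n (g y) \<longleftrightarrow> prefix_bits n x = prefix_bits n y"
proof
  assume "prefix_bits n (g x) = prefix_bits n (g y)"
  from level_perm_prefix_bits[OF level_perm_inv_into[OF assms] this] show "prefix_bits n x = prefix_bits n y"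
    using level_perm_bij[OF assms] by (simp add: bij_is_inj)
qed (rule level_perm_prefix_bits[OF assms])

lemma level_perm_mem_image_iff:
  assumes "level_perm n g"
  shows "x \<in> g ` A \<longleftrightarrow> inv_into UNIV g x \<in> A"
proof
  assume "x \<in> g ` A"
  then obtain a where "a \<in> A" "x = g a"
    by blast
  then show "inv_into UNIV g x \<in> A"
    using level_perm_bij[OF assms] by (simp add: bij_is_inj)
next
  assume "inv_into UNIV g x \<in> A"
  then have "g (inv_into UNIV g x) \<in> g ` A"
    by (rule imageI)
  then show "x \<in> g ` A"
    using assms by simp
qed

lemma level_perm_image_cyl:
  assumes "level_perm n g"
  shows "g ` cyl n a = cyl n (g a)"
proof -
  have "prefix_bits n (inv_into UNIV g y) = prefix_bits n a \<longleftrightarrow> prefix_bits n y = prefix_bits n (g a)" for y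
    using level_perm_prefix_bits_eq_iff[OF assms, of "inv_into UNIV g y" a] assms by simp
  then show ?thesis
    by (simp only: set_eq_iff level_perm_mem_image_iff[OF assms] mem_cyl simp_thms)
qed

lemma distinct_prefix_bits_level_perm_flip:
  assumes "level_perm n g" "g x \<noteq> x" "n < K"
  shows "distinct (map (prefix_bits K) [g (x(n := False)), g (x(n := True)), x(n := False), x(n := True)])"
proof -
  define a b where "a = x(n := False)" and "b = x(n := True)"
  have gK: "level_perm K g"
    using assms(1,3) by (simp add: level_perm_mono)
  have lift: "prefix_bits K u \<noteq> prefix_bits K v" if "prefix_bits n u \<noteq> prefix_bits n v" for u v
    using that prefix_bits_eq_mono[of K u v n] assms(3) by auto
  have "prefix_bits n (g x) \<noteq> prefix_bits n x"
    using level_perm_fixed[OF assms(1)] assms(2) by blast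
  moreover have ax: "prefix_bits n a = prefix_bits n x" and bx: "prefix_bits n b = prefix_bits n x"
    by (simp_all add: a_def b_def)
  moreover note level_perm_prefix_bits[OF assms(1) ax] level_perm_prefix_bits[OF assms(1) bx]
  ultimately have "prefix_bits K (g a) \<noteq> prefix_bits K a" "prefix_bits K (g a) \<noteq> prefix_bits K b"
    "prefix_bits K (g b) \<noteq> prefix_bits K a" "prefix_bits K (g b) \<noteq> prefix_bits K b"
    by (simp_all add: lift)
  moreover have "prefix_bits K a \<noteq> prefix_bits K b"
    using assms(3) by (auto simp: a_def b_def prefix_bits_eq_iff)
  ultimately show ?thesis
    by (simp add: level_perm_prefix_bits_eq_iff[OF gK] flip: a_def b_def)
qed

lemma prefix_determined_level_perm_image:
  assumes "level_perm n g" "prefix_determined n A"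
  shows "prefix_determined n (g ` A)"
  unfolding prefix_determined_def level_perm_mem_image_iff[OF assms(1)]
proof (intro allI impI)
  fix x y
  assume "prefix_bits n x = prefix_bits n y"
  then have "prefix_bits n (inv_into UNIV g x) = prefix_bits n (inv_into UNIV g y)"
    by (rule level_perm_prefix_bits[OF level_perm_inv_into[OF assms(1)]])
  then show "inv_into UNIV g x \<in> A \<longleftrightarrow> inv_into UNIV g y \<in> A"
    by (rule prefix_determinedD[OF assms(2)])
qed

lemma Sinf_bij: "g \<in> Sinf \<Longrightarrow> bij g"
  using Sinf_iff_level_perm level_perm_bij by blast

lemma Sinf_id: "id \<in> Sinf"
  using Sinf_iff_level_perm level_perm_id by blast

lemma Sinf_comp:
  assumes "g \<in> Sinf" "h \<in> Sinf"
  shows "g \<circ> h \<in> Sinf"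
proof -
  obtain m n where "level_perm m g" "level_perm n h"
    using assms by (auto simp: Sinf_iff_level_perm)
  then have "level_perm (max m n) g" "level_perm (max m n) h"
    by (simp_all add: level_perm_mono)
  then show ?thesis
    unfolding Sinf_iff_level_perm by (blast intro: level_perm_comp)
qed

lemma Sinf_inv_into: "g \<in> Sinf \<Longrightarrow> inv_into UNIV g \<in> Sinf"
  unfolding Sinf_iff_level_perm by (blast intro: level_perm_inv_into)

lemma clopen_set_Sinf_image:
  assumes "g \<in> Sinf" "clopen_set A"
  shows "clopen_set (g ` A)"
proof -
  obtain m n where "level_perm m g" "prefix_determined n A"
    using assms by (auto simp: Sinf_iff_level_perm clopen_set_iff_prefix_determined)
  then have "level_perm (max m n) g" "prefix_determined (max m n) A"
    by (simp_all add: level_perm_mono prefix_determined_mono)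
  then show ?thesis
    by (intro clopen_set_prefix_determined[of "max m n"] prefix_determined_level_perm_image)
qed

section \<open>Transpositions of cylinders\<close>

definition swap_cyl :: "nat \<Rightarrow> cantor \<Rightarrow> cantor \<Rightarrow> cantor \<Rightarrow> cantor" where
  "swap_cyl n u v z =
     (if prefix_bits n z = prefix_bits n u then graft n v z
      else if prefix_bits n z = prefix_bits n v then graft n u z else z)"

lemma prefix_bits_swap_cyl:
  "prefix_bits n (swap_cyl n u v z) =
     (if prefix_bits n z = prefix_bits n u then prefix_bits n v
      else if prefix_bits n z = prefix_bits n v then prefix_bits n u else prefix_bits n z)"
  by (simp add: swap_cyl_def)

lemma swap_cyl_tail: "n \<le> i \<Longrightarrow> swap_cyl n u v z i = z i"
  by (simp add: swap_cyl_def graft_def)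

lemma swap_cyl_outside:
  "prefix_bits n z \<noteq> prefix_bits n u \<Longrightarrow> prefix_bits n z \<noteq> prefix_bits n v \<Longrightarrow> swap_cyl n u v z = z"
  by (simp add: swap_cyl_def)

lemma swap_cyl_swap_cyl [simp]: "swap_cyl n u v (swap_cyl n u v z) = z"
  by (rule cantor_eqI[of n]) (auto simp: prefix_bits_swap_cyl swap_cyl_tail)

lemma swap_cyl_comp_self: "swap_cyl n u v \<circ> swap_cyl n u v = id"
  by (simp add: fun_eq_iff)

lemma inv_into_swap_cyl: "inv_into UNIV (swap_cyl n u v) = swap_cyl n u v"
  by (rule inv_unique_comp) (simp_all add: swap_cyl_comp_self)

lemma swap_cyl_cong:
  "prefix_bits n u = prefix_bits n u' \<Longrightarrow> prefix_bits n v = prefix_bits n v' \<Longrightarrow> swap_cyl n u v = swap_cyl n u' v'"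
  by (rule ext, rule cantor_eqI[of n]) (simp_all add: prefix_bits_swap_cyl swap_cyl_tail)

lemma swap_cyl_trivial: "prefix_bits n u = prefix_bits n v \<Longrightarrow> swap_cyl n u v = id"
  by (rule ext, rule cantor_eqI[of n]) (simp_all add: prefix_bits_swap_cyl swap_cyl_tail)

lemma level_perm_swap_cyl: "level_perm n (swap_cyl n u v)"
  unfolding level_perm_def
proof (intro conjI allI impI)
  show "bij (swap_cyl n u v)"
    by (rule o_bij[OF swap_cyl_comp_self swap_cyl_comp_self])
  show "swap_cyl n u v x i = x i" if "n \<le> i" for x i
    using that by (rule swap_cyl_tail)
  show "prefix_bits n (swap_cyl n u v x) = prefix_bits n (swap_cyl n u v y)"
    if "prefix_bits n x = prefix_bits n y" for x y
    using that by (simp only: prefix_bits_swap_cyl)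
qed

lemma bij_swap_cyl: "bij (swap_cyl n u v)"
  by (rule level_perm_bij[OF level_perm_swap_cyl])

lemma swap_cyl_conj:
  assumes "level_perm n s"
  shows "s \<circ> swap_cyl n u v \<circ> inv_into UNIV s = swap_cyl n (s u) (s v)"
proof
  fix z
  define w where "w = inv_into UNIV s z"
  have z: "s w = z"
    using assms by (simp add: w_def)
  have prefix_iff: "prefix_bits n z = prefix_bits n (s a) \<longleftrightarrow> prefix_bits n w = prefix_bits n a" for a
    unfolding z[symmetric] by (rule level_perm_prefix_bits_eq_iff[OF assms])
  have graft_z: "graft n a z = graft n a w" for a
    unfolding z[symmetric] by (rule graft_level_perm[OF assms])
  show "(s \<circ> swap_cyl n u v \<circ> inv_into UNIV s) z = swap_cyl n (s u) (s v) z"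
    unfolding swap_cyl_def
    by (simp add: w_def[symmetric] prefix_iff graft_z level_perm_graft[OF assms] z)
qed

lemma swap_cyl_Suc_split:
  assumes "prefix_bits n u \<noteq> prefix_bits n v"
  shows "swap_cyl n u v =
    swap_cyl (Suc n) (u(n := False)) (v(n := False)) \<circ> swap_cyl (Suc n) (u(n := True)) (v(n := True))"
proof (rule ext, rule cantor_eqI[of "Suc n"])
  fix z
  show "prefix_bits (Suc n) (swap_cyl n u v z) = prefix_bits (Suc n)
    ((swap_cyl (Suc n) (u(n := False)) (v(n := False)) \<circ> swap_cyl (Suc n) (u(n := True)) (v(n := True))) z)"
    using assms by (simp only: o_apply prefix_bits_swap_cyl) (auto simp: prefix_bits_Suc swap_cyl_tail prefix_bits_swap_cyl)
qed (simp add: swap_cyl_tail)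

definition moved_prefixes :: "nat \<Rightarrow> (cantor \<Rightarrow> cantor) \<Rightarrow> bool list set" where
  "moved_prefixes n h = prefix_bits n ` {x. prefix_bits n (h x) \<noteq> prefix_bits n x}"

lemma finite_moved_prefixes: "finite (moved_prefixes n h)"
  unfolding moved_prefixes_def by (rule finite_subset[OF image_mono[OF subset_UNIV] finite_range_prefix_bits])

lemma prefix_bits_mem_moved_prefixes:
  assumes "level_perm n h"
  shows "prefix_bits n x \<in> moved_prefixes n h \<longleftrightarrow> prefix_bits n (h x) \<noteq> prefix_bits n x"
proof
  assume "prefix_bits n x \<in> moved_prefixes n h"
  then obtain y where y: "prefix_bits n x = prefix_bits n y" "prefix_bits n (h y) \<noteq> prefix_bits n y"
    unfolding moved_prefixes_def by (rule imageE) simp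
  then show "prefix_bits n (h x) \<noteq> prefix_bits n x"
    using level_perm_prefix_bits[OF assms y(1)] by simp
next
  assume "prefix_bits n (h x) \<noteq> prefix_bits n x"
  then show "prefix_bits n x \<in> moved_prefixes n h"
    unfolding moved_prefixes_def by (intro imageI) simp
qed

lemma moved_prefixes_swap_cyl_comp:
  assumes h: "level_perm n h" and x: "prefix_bits n (h x) \<noteq> prefix_bits n x"
  shows "moved_prefixes n (swap_cyl n x (h x) \<circ> h) \<subset> moved_prefixes n h"
proof -
  let ?h' = "swap_cyl n x (h x) \<circ> h"
  have h': "level_perm n ?h'"
    by (rule level_perm_comp[OF level_perm_swap_cyl h])
  have "prefix_bits n (?h' y) = prefix_bits n y" if y: "prefix_bits n (h y) = prefix_bits n y" for y
  proof -
    have "prefix_bits n y \<noteq> prefix_bits n x"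
      using x y level_perm_prefix_bits[OF h, of y x] by auto
    moreover from this have "prefix_bits n (h y) \<noteq> prefix_bits n (h x)"
      by (simp add: level_perm_prefix_bits_eq_iff[OF h])
    ultimately show ?thesis
      using y by (simp add: prefix_bits_swap_cyl)
  qed
  then have "prefix_bits n y \<in> moved_prefixes n h"
    if "prefix_bits n y \<in> moved_prefixes n ?h'" for y
    using that unfolding prefix_bits_mem_moved_prefixes[OF h] prefix_bits_mem_moved_prefixes[OF h']
    by blast
  then have "moved_prefixes n ?h' \<subseteq> moved_prefixes n h"
    by (auto simp: moved_prefixes_def)
  moreover have "prefix_bits n x \<in> moved_prefixes n h - moved_prefixes n ?h'"
    using x by (simp add: prefix_bits_mem_moved_prefixes[OF h] prefix_bits_mem_moved_prefixes[OF h']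
        prefix_bits_swap_cyl)
  ultimately show ?thesis
    by blast
qed

lemma level_perm_induct [consumes 1, case_names id swap]:
  assumes "level_perm n h"
    and id: "P id"
    and swap: "\<And>u v g. level_perm n g \<Longrightarrow> P g \<Longrightarrow> P (swap_cyl n u v \<circ> g)"
  shows "P h"
  using assms(1)
proof (induction "card (moved_prefixes n h)" arbitrary: h rule: less_induct)
  case less
  show ?case
  proof (cases "\<exists>x. prefix_bits n (h x) \<noteq> prefix_bits n x")
    case False
    then have "h = id"
      using level_perm_fixed[OF less.prems] by auto
    with id show ?thesis
      by simp
  next
    case True
    then obtain x where x: "prefix_bits n (h x) \<noteq> prefix_bits n x"
      by blast
    define h' where "h' = swap_cyl n x (h x) \<circ> h"
    have h': "level_perm n h'"
      unfolding h'_def by (rule level_perm_comp[OF level_perm_swap_cyl less.prems])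
    have "card (moved_prefixes n h') < card (moved_prefixes n h)"
      unfolding h'_def
      by (rule psubset_card_mono[OF finite_moved_prefixes moved_prefixes_swap_cyl_comp[OF less.prems x]])
    then have "P h'"
      using less.hyps h' by blast
    then have "P (swap_cyl n x (h x) \<circ> h')"
      by (rule swap[OF h'])
    also have "swap_cyl n x (h x) \<circ> h' = h"
      by (simp add: h'_def fun_eq_iff)
    finally show ?thesis .
  qed
qed

lemma level_perm_map_prefixes:
  assumes "length xs = length ys" "distinct (map (prefix_bits n) xs)" "distinct (map (prefix_bits n) ys)"
  shows "\<exists>s. level_perm n s \<and> map (prefix_bits n \<circ> s) xs = map (prefix_bits n) ys"
  using assms
proof (induction xs ys rule: list_induct2)
  case Nil
  show ?case
    using level_perm_id by auto
next
  case (Cons x xs y ys)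
  have "\<exists>s. level_perm n s \<and> map (prefix_bits n \<circ> s) xs = map (prefix_bits n) ys"
    using Cons.prems by (intro Cons.IH) simp_all
  then obtain s where s: "level_perm n s" "map (prefix_bits n \<circ> s) xs = map (prefix_bits n) ys"
    by blast
  define s' where "s' = swap_cyl n (s x) y \<circ> s"
  have "level_perm n s'"
    unfolding s'_def by (rule level_perm_comp[OF level_perm_swap_cyl s(1)])
  moreover have "prefix_bits n (s' x) = prefix_bits n y"
    by (simp add: s'_def prefix_bits_swap_cyl)
  moreover have "prefix_bits n (s' a) = prefix_bits n (s a)" if "a \<in> set xs" for a
  proof -
    have "prefix_bits n a \<noteq> prefix_bits n x"
      using Cons.prems(1) imageI[OF that, of "prefix_bits n"] by auto
    then have "prefix_bits n (s a) \<noteq> prefix_bits n (s x)"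
      by (simp add: level_perm_prefix_bits_eq_iff[OF s(1)])
    moreover have "prefix_bits n (s a) \<in> set (map (prefix_bits n) ys)"
      using that by (simp flip: s(2))
    then have "prefix_bits n (s a) \<noteq> prefix_bits n y"
      using Cons.prems(2) by auto
    ultimately show ?thesis
      by (simp add: s'_def prefix_bits_swap_cyl)
  qed
  then have "map (prefix_bits n \<circ> s') (x # xs) = map (prefix_bits n) (y # ys)"
    using \<open>prefix_bits n (s' x) = prefix_bits n y\<close> s(2)[symmetric] by simp
  with \<open>level_perm n s'\<close> show ?case
    by blast
qed

section \<open>The group G\<close>

lemma cls_eq_iff: "cls A = cls B \<longleftrightarrow> B = A \<or> B = - A"
  by (auto simp: cls_def doubleton_eq_iff)

lemma cls_in_Ctilde_iff: "cls A \<in> Ctilde \<longleftrightarrow> clopen_set A"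
proof
  assume "cls A \<in> Ctilde"
  then obtain B where "cls A = cls B" "clopen_set B"
    by (auto simp: Ctilde_def)
  then show "clopen_set A"
    by (auto simp: cls_eq_iff clopen_set_def closed_def)
qed (auto simp: Ctilde_def)

lemma csum_cls: "csum (cls A) (cls B) = cls (sym_diff A B)"
proof (rule Set.set_eqI)
  fix C
  have "C \<in> csum (cls A) (cls B) \<longleftrightarrow> (\<exists>X Y. C = sym_diff X Y \<and> X \<in> {A, - A} \<and> Y \<in> {B, - B})"
    unfolding csum_def cls_def by auto
  also have "\<dots> \<longleftrightarrow> C \<in> {sym_diff A B, sym_diff A (- B), sym_diff (- A) B, sym_diff (- A) (- B)}"
    by (simp only: insert_iff empty_iff) metis
  also have "\<dots> \<longleftrightarrow> C \<in> cls (sym_diff A B)"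
  proof -
    have "sym_diff A (- B) = - sym_diff A B" "sym_diff (- A) B = - sym_diff A B"
      "sym_diff (- A) (- B) = sym_diff A B"
      by auto
    then show ?thesis
      unfolding cls_def by (simp only: insert_iff empty_iff) blast
  qed
  finally show "C \<in> csum (cls A) (cls B) \<longleftrightarrow> C \<in> cls (sym_diff A B)" .
qed

lemma cact_cls: "bij g \<Longrightarrow> cact g (cls A) = cls (g ` A)"
  by (simp add: cact_def cls_def bij_image_Compl_eq)

lemma clopen_set_sym_diff: "clopen_set A \<Longrightarrow> clopen_set B \<Longrightarrow> clopen_set (sym_diff A B)"
  by (simp add: clopen_set_def open_Un open_Diff closed_Un closed_Diff)

lemma image_sym_diff: "inj g \<Longrightarrow> g ` sym_diff A B = sym_diff (g ` A) (g ` B)"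
  by (simp add: image_Un image_set_diff)

lemma sym_diff_assoc: "sym_diff (sym_diff A B) C = sym_diff A (sym_diff B C)"
  by blast

lemma carrier_Ggrp_iff: "x \<in> carrier Ggrp \<longleftrightarrow> (\<exists>A g. x = (cls A, g) \<and> clopen_set A \<and> g \<in> Sinf)"
  by (auto simp: Ggrp_def Ctilde_def)

lemma cls_pair_in_carrier_Ggrp [simp]: "(cls A, g) \<in> carrier Ggrp \<longleftrightarrow> clopen_set A \<and> g \<in> Sinf"
  by (simp add: Ggrp_def cls_in_Ctilde_iff)

lemma one_Ggrp: "\<one>\<^bsub>Ggrp\<^esub> = (cls {}, id)"
  by (simp add: Ggrp_def)

lemma mult_Ggrp_cls:
  "bij g \<Longrightarrow> (cls A, g) \<otimes>\<^bsub>Ggrp\<^esub> (cls B, h) = (cls (sym_diff A (g ` B)), g \<circ> h)"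
  by (simp add: Ggrp_def csum_cls cact_cls)

lemma inv_pair_mult_Ggrp_cls:
  assumes "g \<in> Sinf"
  shows "(cls (inv_into UNIV g ` A), inv_into UNIV g) \<otimes>\<^bsub>Ggrp\<^esub> (cls A, g) = \<one>\<^bsub>Ggrp\<^esub>"
proof -
  have "bij g" "bij (inv_into UNIV g)"
    using assms by (simp_all add: Sinf_bij bij_imp_bij_inv)
  then show ?thesis
    by (simp add: mult_Ggrp_cls one_Ggrp image_comp inv_o_cancel bij_is_inj)
qed

lemma group_Ggrp: "group Ggrp"
proof (rule groupI)
  fix x y
  assume "x \<in> carrier Ggrp" "y \<in> carrier Ggrp"
  then obtain A g B h where "x = (cls A, g)" "clopen_set A" "g \<in> Sinf"
    and "y = (cls B, h)" "clopen_set B" "h \<in> Sinf"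
    by (auto simp: carrier_Ggrp_iff)
  then show "x \<otimes>\<^bsub>Ggrp\<^esub> y \<in> carrier Ggrp"
    by (simp add: mult_Ggrp_cls Sinf_bij clopen_set_sym_diff clopen_set_Sinf_image Sinf_comp)
next
  show "\<one>\<^bsub>Ggrp\<^esub> \<in> carrier Ggrp"
    by (simp add: one_Ggrp Sinf_id clopen_set_def)
next
  fix x y z
  assume "x \<in> carrier Ggrp" "y \<in> carrier Ggrp" "z \<in> carrier Ggrp"
  then obtain A g B h C k where "x = (cls A, g)" "g \<in> Sinf" "y = (cls B, h)" "h \<in> Sinf" "z = (cls C, k)"
    by (auto simp: carrier_Ggrp_iff)
  moreover from this have "bij g" "bij h" "bij (g \<circ> h)"
    by (simp_all add: Sinf_bij bij_comp)
  ultimately show "x \<otimes>\<^bsub>Ggrp\<^esub> y \<otimes>\<^bsub>Ggrp\<^esub> z = x \<otimes>\<^bsub>Ggrp\<^esub> (y \<otimes>\<^bsub>Ggrp\<^esub> z)"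
    by (simp add: mult_Ggrp_cls image_sym_diff bij_is_inj sym_diff_assoc image_comp o_assoc)
next
  fix x
  assume "x \<in> carrier Ggrp"
  then obtain A g where x: "x = (cls A, g)" "clopen_set A" "g \<in> Sinf"
    by (auto simp: carrier_Ggrp_iff)
  then show "\<one>\<^bsub>Ggrp\<^esub> \<otimes>\<^bsub>Ggrp\<^esub> x = x"
    by (simp add: one_Ggrp mult_Ggrp_cls)
  have "(cls (inv_into UNIV g ` A), inv_into UNIV g) \<in> carrier Ggrp"
    using x by (simp add: Sinf_inv_into clopen_set_Sinf_image)
  with x inv_pair_mult_Ggrp_cls show "\<exists>y\<in>carrier Ggrp. y \<otimes>\<^bsub>Ggrp\<^esub> x = \<one>\<^bsub>Ggrp\<^esub>"
    by blast
qed

interpretation Ggrp: group Ggrp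
  by (rule group_Ggrp)

lemma inv_Ggrp_cls:
  assumes "clopen_set A" "g \<in> Sinf"
  shows "inv\<^bsub>Ggrp\<^esub> (cls A, g) = (cls (inv_into UNIV g ` A), inv_into UNIV g)"
  using assms by (intro Ggrp.inv_equality inv_pair_mult_Ggrp_cls)
    (simp_all add: Sinf_inv_into clopen_set_Sinf_image)

definition embC :: "cantor set \<Rightarrow> cantor set set \<times> (cantor \<Rightarrow> cantor)" where
  "embC A = (cls A, id)"

definition embS :: "(cantor \<Rightarrow> cantor) \<Rightarrow> cantor set set \<times> (cantor \<Rightarrow> cantor)" where
  "embS g = (cls {}, g)"

lemma embC_in_carrier: "clopen_set A \<Longrightarrow> embC A \<in> carrier Ggrp"
  by (simp add: embC_def Sinf_id)

lemma embS_in_carrier: "g \<in> Sinf \<Longrightarrow> embS g \<in> carrier Ggrp"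
  by (simp add: embS_def clopen_set_def)

lemma embC_empty: "embC {} = \<one>\<^bsub>Ggrp\<^esub>"
  by (simp add: embC_def one_Ggrp)

lemma embS_id: "embS id = \<one>\<^bsub>Ggrp\<^esub>"
  by (simp add: embS_def one_Ggrp)

lemma embC_mult: "embC A \<otimes>\<^bsub>Ggrp\<^esub> embC B = embC (sym_diff A B)"
  by (simp add: embC_def mult_Ggrp_cls)

lemma embS_mult: "bij g \<Longrightarrow> embS g \<otimes>\<^bsub>Ggrp\<^esub> embS h = embS (g \<circ> h)"
  by (simp add: embS_def mult_Ggrp_cls)

lemma embC_mult_embS: "embC A \<otimes>\<^bsub>Ggrp\<^esub> embS g = (cls A, g)"
  by (simp add: embC_def embS_def mult_Ggrp_cls)

lemma embC_inv: "clopen_set A \<Longrightarrow> inv\<^bsub>Ggrp\<^esub> embC A = embC A"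
  by (simp add: embC_def inv_Ggrp_cls Sinf_id)

lemma embS_inv: "g \<in> Sinf \<Longrightarrow> inv\<^bsub>Ggrp\<^esub> embS g = embS (inv_into UNIV g)"
  by (simp add: embS_def inv_Ggrp_cls clopen_set_def)

lemma embS_conj_embC:
  assumes "g \<in> Sinf"
  shows "embS g \<otimes>\<^bsub>Ggrp\<^esub> embC A \<otimes>\<^bsub>Ggrp\<^esub> inv\<^bsub>Ggrp\<^esub> embS g = embC (g ` A)"
proof -
  have "bij g"
    using assms by (rule Sinf_bij)
  then have "g \<circ> inv_into UNIV g = id"
    by (rule surj_iff[THEN iffD1, OF bij_is_surj])
  with \<open>bij g\<close> show ?thesis
    unfolding embS_inv[OF assms] by (simp add: embS_def embC_def mult_Ggrp_cls)
qed

lemma embS_conj: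
  assumes "s \<in> Sinf" "bij g"
  shows "embS s \<otimes>\<^bsub>Ggrp\<^esub> embS g \<otimes>\<^bsub>Ggrp\<^esub> inv\<^bsub>Ggrp\<^esub> embS s =
    embS (s \<circ> g \<circ> inv_into UNIV s)"
  using Sinf_bij[OF assms(1)] assms(2) by (simp add: embS_inv[OF assms(1)] embS_mult bij_comp)

lemma conj_embC:
  assumes "clopen_set C" "g \<in> Sinf"
  shows "(cls C, g) \<otimes>\<^bsub>Ggrp\<^esub> embC B \<otimes>\<^bsub>Ggrp\<^esub> inv\<^bsub>Ggrp\<^esub> (cls C, g) = embC (g ` B)"
proof -
  have "bij g"
    using assms(2) by (rule Sinf_bij)
  then have "g \<circ> inv_into UNIV g = id" "g ` inv_into UNIV g ` C = C"
    by (simp_all add: bij_is_surj surj_iff[THEN iffD1] image_comp)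
  moreover have "sym_diff (sym_diff C (g ` B)) C = g ` B"
    by blast
  ultimately show ?thesis
    using \<open>bij g\<close> unfolding inv_Ggrp_cls[OF assms] by (simp add: embC_def mult_Ggrp_cls)
qed

lemma Cpart_eq: "Cpart = embC ` {A. clopen_set A}"
  by (auto simp: Cpart_def Ctilde_def embC_def)

section \<open>Normal subgroups of G\<close>

context
  fixes N
  assumes N_normal: "N \<lhd> Ggrp"
begin

lemmas N_subgroup = normal_imp_subgroup[OF N_normal]
lemmas N_mult = subgroup.m_closed[OF N_subgroup]
lemmas N_inv = subgroup.m_inv_closed[OF N_subgroup]
lemmas N_one = subgroup.one_closed[OF N_subgroup]
lemmas N_subset = subgroup.subset[OF N_subgroup]
lemmas N_conj = normal.inv_op_closed2[OF N_normal]

lemma embC_conj_mem: "embC A \<in> N \<Longrightarrow> g \<in> Sinf \<Longrightarrow> embC (g ` A) \<in> N"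
  using N_conj[OF embS_in_carrier] embS_conj_embC by metis

lemma embS_conj_mem:
  "embS h \<in> N \<Longrightarrow> s \<in> Sinf \<Longrightarrow> bij h \<Longrightarrow> embS (s \<circ> h \<circ> inv_into UNIV s) \<in> N"
  using N_conj[OF embS_in_carrier] embS_conj by metis

text \<open>The commutator of f_B with (f_C, g) is f_{B + g(B)}; taking for B a small cylinder around
  a point moved by g makes B + g(B) a proper nonempty clopen set.\<close>
lemma embC_nontrivial_mem:
  assumes h: "(cls C, g) \<in> N" and "g \<noteq> id"
  shows "\<exists>D. clopen_set D \<and> D \<noteq> {} \<and> D \<noteq> UNIV \<and> embC D \<in> N"
proof -
  have C: "clopen_set C" and g: "g \<in> Sinf"
    using N_subset h by auto
  obtain n where "level_perm n g"
    using g by (auto simp: Sinf_iff_level_perm)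
  then have gn: "level_perm (Suc n) g"
    by (simp add: level_perm_mono)
  obtain x where "g x \<noteq> x"
    using \<open>g \<noteq> id\<close> by (metis eq_id_iff)
  then have gx: "prefix_bits n (g x) \<noteq> prefix_bits n x"
    using level_perm_fixed[OF \<open>level_perm n g\<close>] by blast
  define B where "B = cyl (Suc n) x"
  have B: "embC B \<in> carrier Ggrp"
    by (simp add: B_def embC_in_carrier clopen_set_cyl)
  have hc: "(cls C, g) \<in> carrier Ggrp" "inv\<^bsub>Ggrp\<^esub> (cls C, g) \<in> carrier Ggrp"
    using C g by simp_all
  have "embC (sym_diff B (g ` B)) =
      embC B \<otimes>\<^bsub>Ggrp\<^esub> ((cls C, g) \<otimes>\<^bsub>Ggrp\<^esub> embC B \<otimes>\<^bsub>Ggrp\<^esub> inv\<^bsub>Ggrp\<^esub> (cls C, g))"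
    by (simp add: conj_embC[OF C g] embC_mult)
  also have "\<dots> = embC B \<otimes>\<^bsub>Ggrp\<^esub> (cls C, g) \<otimes>\<^bsub>Ggrp\<^esub> inv\<^bsub>Ggrp\<^esub> embC B
      \<otimes>\<^bsub>Ggrp\<^esub> inv\<^bsub>Ggrp\<^esub> (cls C, g)"
    using B hc by (simp add: embC_inv B_def clopen_set_cyl Ggrp.m_assoc)
  also have "\<dots> \<in> N"
    by (intro N_mult N_conj N_inv B h)
  finally have "embC (sym_diff B (g ` B)) \<in> N" .
  moreover have gB: "g ` B = cyl (Suc n) (g x)"
    unfolding B_def by (rule level_perm_image_cyl[OF gn])
  have "x \<notin> cyl (Suc n) (g x)"
    using gx prefix_bits_eq_mono[of "Suc n" x "g x" n] by auto
  then have "x \<in> sym_diff B (g ` B)"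
    unfolding gB by (simp add: B_def)
  moreover have "x(n := \<not> x n) \<notin> sym_diff B (g ` B)"
    using level_perm_tail[OF \<open>level_perm n g\<close>, of n x] unfolding gB by (simp add: B_def prefix_bits_Suc)
  moreover have "clopen_set (sym_diff B (g ` B))"
    unfolding gB by (simp add: B_def clopen_set_sym_diff clopen_set_cyl)
  ultimately show ?thesis
    by blast
qed

text \<open>Conjugating by the transposition of the cylinders of x and y flips exactly these two
  cylinders in or out of A.\<close>
lemma embC_cyl_pair_mem:
  assumes "embC A \<in> N" "prefix_determined m A" "x \<in> A" "y \<notin> A"
  shows "embC (cyl m x \<union> cyl m y) \<in> N"
proof -
  define s where "s = swap_cyl m x y"
  have s: "level_perm m s"
    by (simp add: s_def level_perm_swap_cyl)
  then have "s \<in> Sinf"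
    unfolding Sinf_iff_level_perm by blast
  have "embC (sym_diff A (s ` A)) \<in> N"
    using N_mult[OF assms(1) embC_conj_mem[OF assms(1) \<open>s \<in> Sinf\<close>]] by (simp add: embC_mult)
  moreover have "sym_diff A (s ` A) = cyl m x \<union> cyl m y"
  proof (rule Set.set_eqI)
    fix z
    have sA: "z \<in> s ` A \<longleftrightarrow> s z \<in> A"
      unfolding level_perm_mem_image_iff[OF s] by (simp add: s_def inv_into_swap_cyl)
    note A = prefix_determinedD[OF assms(2)]
    have "prefix_bits m x \<noteq> prefix_bits m y"
      using A[of x y] assms(3,4) by blast
    then consider "prefix_bits m z = prefix_bits m x" "prefix_bits m (s z) = prefix_bits m y"
      | "prefix_bits m z = prefix_bits m y" "prefix_bits m (s z) = prefix_bits m x"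
      | "prefix_bits m z \<noteq> prefix_bits m x" "prefix_bits m z \<noteq> prefix_bits m y" "s z = z"
      by (auto simp: s_def prefix_bits_swap_cyl swap_cyl_outside)
    then show "z \<in> sym_diff A (s ` A) \<longleftrightarrow> z \<in> cyl m x \<union> cyl m y"
    proof cases
      case 1
      then show ?thesis
        using A[of z x] A[of "s z" y] assms(3,4) sA by auto
    next
      case 2
      then show ?thesis
        using A[of z y] A[of "s z" x] assms(3,4) sA by auto
    next
      case 3
      then show ?thesis
        using sA by auto
    qed
  qed
  ultimately show ?thesis
    by simp
qed

lemma embC_cyl_pair_transport:
  assumes "embC (cyl m a \<union> cyl m b) \<in> N"
    "prefix_bits m a \<noteq> prefix_bits m b" "prefix_bits m p \<noteq> prefix_bits m q"
  shows "embC (cyl m p \<union> cyl m q) \<in> N"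
proof -
  obtain s where s: "level_perm m s" "map (prefix_bits m \<circ> s) [a, b] = map (prefix_bits m) [p, q]"
    using level_perm_map_prefixes[of "[a, b]" "[p, q]" m] assms(2,3) by auto
  then have "s \<in> Sinf"
    by (auto simp: Sinf_iff_level_perm)
  have "cyl m (s a) = cyl m p" "cyl m (s b) = cyl m q"
    using s(2) by (simp_all add: cyl_eq_iff)
  then have "s ` (cyl m a \<union> cyl m b) = cyl m p \<union> cyl m q"
    by (simp add: image_Un level_perm_image_cyl[OF s(1)])
  then show ?thesis
    using embC_conj_mem[OF assms(1) \<open>s \<in> Sinf\<close>] by simp
qed

lemma embC_cyl_mem:
  assumes "embC A \<in> N" "A \<noteq> {}" "A \<noteq> UNIV" "prefix_determined K A"
  shows "embC (cyl K w) \<in> N"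
proof -
  obtain x y where xy: "x \<in> A" "y \<notin> A"
    using assms(2,3) by blast
  have A: "prefix_determined (Suc K) A"
    using assms(4) by (simp add: prefix_determined_mono)
  then have "prefix_bits (Suc K) x \<noteq> prefix_bits (Suc K) y"
    using xy prefix_determinedD by blast
  moreover have "prefix_bits (Suc K) (w(K := False)) \<noteq> prefix_bits (Suc K) (w(K := True))"
    by (simp add: prefix_bits_Suc)
  ultimately have "embC (cyl (Suc K) (w(K := False)) \<union> cyl (Suc K) (w(K := True))) \<in> N"
    using embC_cyl_pair_transport embC_cyl_pair_mem[OF assms(1) A xy] by blast
  then show ?thesis
    by (simp flip: cyl_Suc_split)
qed

lemma embC_prefix_determined_mem:
  assumes cyl: "\<And>w. embC (cyl K w) \<in> N" and B: "prefix_determined K B"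
  shows "embC B \<in> N"
proof -
  have "embC (\<Union> F) \<in> N" if "finite F" "F \<subseteq> range (cyl K)" for F
    using that
  proof (induction F rule: finite_induct)
    case empty
    then show ?case
      by (simp add: embC_empty N_one)
  next
    case (insert c F)
    then obtain w where w: "c = cyl K w"
      by blast
    have "c \<inter> \<Union> F = {}"
    proof -
      have "c \<inter> c' = {}" if "c' \<in> F" for c'
      proof -
        obtain w' where "c' = cyl K w'"
          using \<open>c' \<in> F\<close> insert.prems by blast
        with w insert.hyps(2) that show ?thesis
          by (metis cyl_disjoint cyl_eq_iff)
      qed
      then show ?thesis
        by blast
    qed
    then have "\<Union> (insert c F) = sym_diff c (\<Union> F)"
      by blast
    moreover have "embC c \<otimes>\<^bsub>Ggrp\<^esub> embC (\<Union> F) \<in> N"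
      using insert by (simp add: w cyl N_mult)
    ultimately show ?case
      by (simp add: embC_mult)
  qed
  moreover have "finite (cyl K ` B)" "cyl K ` B \<subseteq> range (cyl K)"
    by (auto intro: finite_subset[OF _ finite_range_cyl])
  ultimately show ?thesis
    by (metis prefix_determined_Union_cyl[OF B])
qed

lemma embC_all_mem:
  assumes "embC A \<in> N" "clopen_set A" "A \<noteq> {}" "A \<noteq> UNIV" "clopen_set B"
  shows "embC B \<in> N"
proof -
  obtain k l where "prefix_determined k A" "prefix_determined l B"
    using assms(2,5) by (auto simp: clopen_set_iff_prefix_determined)
  then have "prefix_determined (max k l) A" "prefix_determined (max k l) B"
    by (simp_all add: prefix_determined_mono)
  then show ?thesis
    using embC_cyl_mem[OF assms(1,3,4)] embC_prefix_determined_mem by blast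
qed

lemma embS_commutator_mem:
  assumes "embS g \<in> N" "g \<in> Sinf" "s \<in> Sinf"
  shows "embS (g \<circ> s \<circ> inv_into UNIV g \<circ> inv_into UNIV s) \<in> N"
proof -
  have "embS (s \<circ> inv_into UNIV g \<circ> inv_into UNIV s) \<in> N"
    using N_inv[OF assms(1)] assms(2,3) by (intro embS_conj_mem) (simp_all add: embS_inv Sinf_inv_into Sinf_bij)
  from N_mult[OF assms(1) this] show ?thesis
    using Sinf_bij[OF assms(2)] by (simp add: embS_mult o_assoc)
qed

text \<open>The commutator of g with the transposition of two cylinders of level K > n that agree
  outside coordinate n is a product of two disjoint transpositions.\<close>
lemma embS_double_transposition_mem:
  assumes "embS g \<in> N" "level_perm n g" "g x \<noteq> x" "n < K"
  shows "\<exists>a b c d. distinct (map (prefix_bits K) [a, b, c, d]) \<and>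
    embS (swap_cyl K a b \<circ> swap_cyl K c d) \<in> N"
proof -
  have gK: "level_perm K g"
    using assms(2,4) by (simp add: level_perm_mono)
  have g: "g \<in> Sinf"
    using assms(2) by (auto simp: Sinf_iff_level_perm)
  define a b where "a = x(n := False)" and "b = x(n := True)"
  define s where "s = swap_cyl K a b"
  have "s \<in> Sinf"
    unfolding s_def Sinf_iff_level_perm by (blast intro: level_perm_swap_cyl)
  then have "embS (g \<circ> s \<circ> inv_into UNIV g \<circ> inv_into UNIV s) \<in> N"
    by (rule embS_commutator_mem[OF assms(1) g])
  moreover have "g \<circ> s \<circ> inv_into UNIV g = swap_cyl K (g a) (g b)"
    unfolding s_def by (rule swap_cyl_conj[OF gK])
  ultimately have "embS (swap_cyl K (g a) (g b) \<circ> swap_cyl K a b) \<in> N"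
    by (simp add: s_def inv_into_swap_cyl)
  moreover have "distinct (map (prefix_bits K) [g a, g b, a, b])"
    unfolding a_def b_def by (rule distinct_prefix_bits_level_perm_flip[OF assms(2-4)])
  ultimately show ?thesis
    by blast
qed

lemma embS_double_transposition_transport:
  assumes "embS (swap_cyl K a b \<circ> swap_cyl K c d) \<in> N"
    "distinct (map (prefix_bits K) [a, b, c, d])" "distinct (map (prefix_bits K) [p, q, r, t])"
  shows "embS (swap_cyl K p q \<circ> swap_cyl K r t) \<in> N"
proof -
  obtain s where s: "level_perm K s" "map (prefix_bits K \<circ> s) [a, b, c, d] = map (prefix_bits K) [p, q, r, t]"
    using level_perm_map_prefixes[OF _ assms(2,3)] by auto
  then have "s \<in> Sinf"
    by (auto simp: Sinf_iff_level_perm)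
  have "s \<circ> (swap_cyl K a b \<circ> swap_cyl K c d) \<circ> inv_into UNIV s =
      (s \<circ> swap_cyl K a b \<circ> inv_into UNIV s) \<circ> (s \<circ> swap_cyl K c d \<circ> inv_into UNIV s)"
    using level_perm_bij[OF s(1)] by (simp add: fun_eq_iff bij_is_inj)
  also have "\<dots> = swap_cyl K p q \<circ> swap_cyl K r t"
    using s by (simp add: swap_cyl_conj swap_cyl_cong[of K "s a" p "s b" q] swap_cyl_cong[of K "s c" r "s d" t])
  finally show ?thesis
    using embS_conj_mem[OF assms(1) \<open>s \<in> Sinf\<close>] by (simp add: bij_comp bij_swap_cyl)
qed

lemma embS_swap_cyl_mem:
  assumes "embS (swap_cyl (Suc L) a b \<circ> swap_cyl (Suc L) c d) \<in> N"
    "distinct (map (prefix_bits (Suc L)) [a, b, c, d])"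
  shows "embS (swap_cyl L u v) \<in> N"
proof (cases "prefix_bits L u = prefix_bits L v")
  case True
  then show ?thesis
    by (simp add: swap_cyl_trivial embS_id N_one)
next
  case False
  then have "distinct (map (prefix_bits (Suc L)) [u(L := False), v(L := False), u(L := True), v(L := True)])"
    by (simp add: prefix_bits_Suc)
  with False show ?thesis
    using embS_double_transposition_transport[OF assms] by (simp add: swap_cyl_Suc_split)
qed

lemma embS_level_perm_mem:
  assumes "\<And>u v. embS (swap_cyl L u v) \<in> N" "level_perm L h"
  shows "embS h \<in> N"
  using assms(2)
proof (induction rule: level_perm_induct)
  case id
  show ?case
    unfolding id_def[symmetric] embS_id by (rule N_one)
next
  case (swap u v g)
  then show ?case
    using N_mult[OF assms(1) swap.IH] by (simp add: embS_mult bij_swap_cyl comp_def)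
qed

lemma normal_eq_carrier:
  assumes embC_mem: "\<And>B. clopen_set B \<Longrightarrow> embC B \<in> N" and h: "(cls C, g) \<in> N" and "g \<noteq> id"
  shows "N = carrier Ggrp"
proof
  show "N \<subseteq> carrier Ggrp"
    by (rule N_subset)
  have C: "clopen_set C" and "g \<in> Sinf"
    using N_subset h by auto
  have "embS g = embC C \<otimes>\<^bsub>Ggrp\<^esub> (cls C, g)"
    by (simp add: embC_def embS_def mult_Ggrp_cls)
  then have gN: "embS g \<in> N"
    using N_mult[OF embC_mem[OF C] h] by simp
  obtain n where gn: "level_perm n g"
    using \<open>g \<in> Sinf\<close> by (auto simp: Sinf_iff_level_perm)
  obtain x where "g x \<noteq> x"
    using \<open>g \<noteq> id\<close> by (metis eq_id_iff)
  show "carrier Ggrp \<subseteq> N"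
  proof
    fix y
    assume "y \<in> carrier Ggrp"
    then obtain B h where y: "y = (cls B, h)" "clopen_set B" "h \<in> Sinf"
      by (auto simp: carrier_Ggrp_iff)
    then obtain l where "level_perm l h"
      by (auto simp: Sinf_iff_level_perm)
    then have h: "level_perm (max l n) h"
      by (simp add: level_perm_mono)
    have "n < Suc (max l n)"
      by simp
    then obtain a b c d where "distinct (map (prefix_bits (Suc (max l n))) [a, b, c, d])"
      "embS (swap_cyl (Suc (max l n)) a b \<circ> swap_cyl (Suc (max l n)) c d) \<in> N"
      using embS_double_transposition_mem[OF gN gn \<open>g x \<noteq> x\<close>] by blast
    then have "embS h \<in> N"
      using embS_swap_cyl_mem embS_level_perm_mem[OF _ h] by blast
    then have "embC B \<otimes>\<^bsub>Ggrp\<^esub> embS h \<in> N"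
      by (rule N_mult[OF embC_mem[OF y(2)]])
    then show "y \<in> N"
      by (simp add: embC_mult_embS y(1))
  qed
qed

lemma normal_in_Cpart_cases:
  assumes "N \<subseteq> Cpart"
  shows "N = {\<one>\<^bsub>Ggrp\<^esub>} \<or> N = Cpart"
proof (cases "\<exists>C. clopen_set C \<and> C \<noteq> {} \<and> C \<noteq> UNIV \<and> embC C \<in> N")
  case True
  then obtain C where C: "clopen_set C" "C \<noteq> {}" "C \<noteq> UNIV" "embC C \<in> N"
    by blast
  then have "Cpart \<subseteq> N"
    using embC_all_mem[OF C(4,1,2,3)] by (auto simp: Cpart_eq)
  with assms show ?thesis
    by blast
next
  case False
  have "y = \<one>\<^bsub>Ggrp\<^esub>" if "y \<in> N" for y
  proof -
    obtain C where C: "clopen_set C" "y = embC C"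
      using assms \<open>y \<in> N\<close> by (auto simp: Cpart_eq)
    with False \<open>y \<in> N\<close> have "C = {} \<or> C = UNIV"
      by blast
    then have "embC C = embC {}"
      by (auto simp: embC_def cls_eq_iff)
    then show ?thesis
      by (simp add: C(2) embC_empty)
  qed
  then show ?thesis
    using N_one by blast
qed

lemma normal_not_in_Cpart:
  assumes "\<not> N \<subseteq> Cpart"
  shows "N = carrier Ggrp"
proof -
  obtain y where "y \<in> N" "y \<notin> Cpart"
    using assms by blast
  from this(1) have "y \<in> carrier Ggrp"
    using N_subset by blast
  then obtain C g where y: "y = (cls C, g)" "clopen_set C"
    by (auto simp: carrier_Ggrp_iff)
  with \<open>y \<notin> Cpart\<close> have "g \<noteq> id"
    by (auto simp: Cpart_eq embC_def)
  with \<open>y \<in> N\<close> obtain D where "clopen_set D" "D \<noteq> {}" "D \<noteq> UNIV" "embC D \<in> N"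
    using embC_nontrivial_mem y(1) by blast
  then show ?thesis
    using normal_eq_carrier[OF _ _ \<open>g \<noteq> id\<close>] embC_all_mem \<open>y \<in> N\<close> y(1) by blast
qed

end

lemma normal_Cpart: "Cpart \<lhd> Ggrp"
  unfolding Ggrp.normal_inv_iff
proof (intro conjI ballI)
  show "subgroup Cpart Ggrp"
  proof (rule Ggrp.subgroupI)
    show "Cpart \<subseteq> carrier Ggrp" "Cpart \<noteq> {}"
      using embC_in_carrier[of "{}"] by (auto simp: Cpart_eq embC_in_carrier clopen_set_def)
    show "inv\<^bsub>Ggrp\<^esub> a \<in> Cpart" if "a \<in> Cpart" for a
      using that by (auto simp: Cpart_eq embC_inv)
    show "a \<otimes>\<^bsub>Ggrp\<^esub> b \<in> Cpart" if "a \<in> Cpart" "b \<in> Cpart" for a b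
      using that by (auto simp: Cpart_eq embC_mult clopen_set_sym_diff)
  qed
  fix x a
  assume "x \<in> carrier Ggrp" "a \<in> Cpart"
  then obtain A g B where "x = (cls A, g)" "clopen_set A" "g \<in> Sinf" "a = embC B" "clopen_set B"
    by (auto simp: carrier_Ggrp_iff Cpart_eq)
  then show "x \<otimes>\<^bsub>Ggrp\<^esub> a \<otimes>\<^bsub>Ggrp\<^esub> inv\<^bsub>Ggrp\<^esub> x \<in> Cpart"
    by (simp add: conj_embC Cpart_eq clopen_set_Sinf_image)
qed

lemma normal_subgroup_cases:
  assumes N: "N \<lhd> Ggrp"
  shows "N = {\<one>\<^bsub>Ggrp\<^esub>} \<or> N = Cpart \<or> N = carrier Ggrp"
  using normal_in_Cpart_cases[OF N] normal_not_in_Cpart[OF N] by blast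

theorem proposition3p1:
  shows "group Ggrp \<and> {H. H \<lhd> Ggrp} = {{\<one>\<^bsub>Ggrp\<^esub>}, Cpart, carrier Ggrp}"
  using group_Ggrp normal_subgroup_cases Ggrp.one_is_normal normal_Cpart Ggrp.normal_self by blast

end
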